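(* Suppose $U_1,\dots,U_N,V_1,\dots,V_n\in\mathbb{R}^d$ form a margin-$m$, relative-bias-$0$ embedding of $S_{n,k}$ with $0<m<1$. Then for every $T\subset[n]$ with $k\le|T|\le\min\bigl(k+\frac{2km}{1-m},\,n-1\bigr)$ there exist $h\in\mathbb{S}^{d-1}$ and $c\in\mathbb{R}$ such that $\langle h,V_i\rangle\ge c$ for all $i\in T$ and $\langle h,V_j\rangle\le c$ for all $j\notin T$.
   Context: $S_{n,k}\in\{0,1\}^{\binom{n}{k}\times n}$ (so $N=\binom nk$) is the matrix whose rows are all the distinct vectors in $\{0,1\}^n$ with exactly $k$ ones, each appearing exactly once. For $A\in\{0,1\}^{N\times n}$ and $m\ge0$, unit vectors $U_1,\dots,U_N,V_1,\dots,V_n\in\mathbb{R}^d$ form a margin-$m$, relative-bias-$0$ embedding of $A$ if $\langle U_j,V_i\rangle\ge m$ whenever $A_{ji}=1$ and $\langle U_j,V_i\rangle\le -m$ whenever $A_{ji}=0$. *)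

theory Defs
  imports "HOL-Analysis.Analysis"
begin

text \<open>A 0/1 matrix with rows indexed by a set R and columns indexed by {..<n}
  is represented by a predicate A :: 'r \<Rightarrow> nat \<Rightarrow> bool (A j i = True means entry 1).\<close>

definition margin_embedding ::
  "'r set \<Rightarrow> nat \<Rightarrow> ('r \<Rightarrow> nat \<Rightarrow> bool) \<Rightarrow> real \<Rightarrow> ('r \<Rightarrow> 'a::real_inner) \<Rightarrow> (nat \<Rightarrow> 'a) \<Rightarrow> bool"
  where "margin_embedding R n A m U V \<longleftrightarrow>
    (\<forall>j\<in>R. norm (U j) = 1) \<and> (\<forall>i<n. norm (V i) = 1) \<and>
    (\<forall>j\<in>R. \<forall>i<n. (A j i \<longrightarrow> inner (U j) (V i) \<ge> m) \<and>
                     (\<not> A j i \<longrightarrow> inner (U j) (V i) \<le> - m))"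

text \<open>Rows of S_{n,k}: each k-subset of {..<n} appears exactly once, as its indicator vector.\<close>

definition ksubsets :: "nat \<Rightarrow> nat \<Rightarrow> nat set set"
  where "ksubsets n k = {S. S \<subseteq> {..<n} \<and> card S = k}"

definition S_matrix :: "nat set \<Rightarrow> nat \<Rightarrow> bool"
  where "S_matrix S i \<longleftrightarrow> i \<in> S"

end

theory Submission
  imports Defs
begin

(* Take h to be the sum of the row vectors U S over all k-subsets S of T, with t = card T.
   For j outside T every term satisfies <U S, V j> <= -m, so <h, V j> <= -m * C(t,k).
   For i in T, the C(t-1,k-1) subsets containing i contribute at least m each and the
   C(t-1,k) others at least -1 (Cauchy-Schwarz); because k * C(t-1,k) = (t-k) * C(t-1,k-1),
   the hypothesis (1-m)(t-k) <= 2km says precisely that this lower bound is still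
   >= -m * C(t,k). Since T misses some column, the threshold -m * C(t,k) is negative,
   hence h is nonzero and can be normalised. *)

lemma choose_pred_absorb:
  fixes t k :: nat
  assumes "0 < k" "0 < t"
  shows "k * ((t - 1) choose k) = (t - k) * ((t - 1) choose (k - 1))"
proof -
  have "t * (k * ((t - 1) choose k)) = k * ((t - k) * (t choose k))"
    by (simp add: binomial_absorb_comp)
  also have "\<dots> = (t - k) * (k * (t choose k))" by simp
  also have "\<dots> = t * ((t - k) * ((t - 1) choose (k - 1)))"
    using binomial_absorption[of "k - 1" t] assms(1) by simp
  finally show ?thesis using assms(2) by simp
qed

lemma card_ksubsets_avoiding:
  assumes "finite T" "i \<in> T"
  shows "card {S. S \<subseteq> T \<and> card S = k \<and> i \<notin> S} = (card T - 1) choose k"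
proof -
  have "{S. S \<subseteq> T \<and> card S = k \<and> i \<notin> S} = {S. S \<subseteq> T - {i} \<and> card S = k}" by auto
  then show ?thesis using n_subsets[of "T - {i}" k] assms by simp
qed

lemma card_ksubsets_containing:
  assumes "finite T" "i \<in> T" "0 < k"
  shows "card {S. S \<subseteq> T \<and> card S = k \<and> i \<in> S} = (card T - 1) choose (k - 1)"
proof -
  let ?A = "{S. S \<subseteq> T \<and> card S = k \<and> i \<in> S}" and ?B = "{S. S \<subseteq> T \<and> card S = k \<and> i \<notin> S}"
  have "finite ?A" "finite ?B"
    using assms(1) by simp_all
  moreover have "{S. S \<subseteq> T \<and> card S = k} = ?A \<union> ?B" by blast
  ultimately have "card ?A + card ?B = card T choose k"
    using n_subsets[OF assms(1), of k] by (simp add: card_Un_disjoint disjoint_iff)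
  moreover have "0 < card T" using assms card_gt_0_iff by blast
  ultimately show ?thesis
    using card_ksubsets_avoiding[OF assms(1,2)] choose_reduce_nat assms(3) by simp
qed

lemma inner_sum_unit_ge:
  fixes U :: "'s \<Rightarrow> 'a::real_inner"
  assumes "finite F" "norm v = 1" "\<And>S. S \<in> F \<Longrightarrow> norm (U S) = 1"
    and "\<And>S. S \<in> F \<Longrightarrow> P S \<Longrightarrow> m \<le> inner (U S) v"
  shows "m * card {S\<in>F. P S} - card {S\<in>F. \<not> P S} \<le> inner (\<Sum>S\<in>F. U S) v"
proof -
  have "inner (\<Sum>S\<in>F. U S) v = (\<Sum>S | S\<in>F \<and> P S. inner (U S) v) + (\<Sum>S | S\<in>F \<and> \<not> P S. inner (U S) v)"
    using sum.Int_Diff[OF assms(1), of _ "Collect P"] by (simp add: inner_sum_left Int_def set_diff_eq)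
  moreover have "(\<Sum>S | S\<in>F \<and> P S. m) \<le> (\<Sum>S | S\<in>F \<and> P S. inner (U S) v)"
    by (rule sum_mono) (use assms(4) in auto)
  moreover have "(\<Sum>S | S\<in>F \<and> \<not> P S. -1) \<le> (\<Sum>S | S\<in>F \<and> \<not> P S. inner (U S) v)"
  proof (rule sum_mono)
    fix S assume "S \<in> {S \<in> F. \<not> P S}"
    then show "-1 \<le> inner (U S) v"
      using Cauchy_Schwarz_ineq2[of "U S" v] assms(2,3) by auto
  qed
  ultimately show ?thesis by (simp add: mult.commute)
qed

lemma margin_choose_ineq:
  fixes m :: real and t k :: nat
  assumes "0 < k" "k \<le> t" "m < 1" "real t \<le> real k + 2 * real k * m / (1 - m)"
  shows "(1 - m) * ((t - 1) choose k) \<le> 2 * m * ((t - 1) choose (k - 1))"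
proof -
  let ?a = "real ((t - 1) choose (k - 1))" and ?b = "real ((t - 1) choose k)"
  have ratio: "real k * ?b = (real t - real k) * ?a"
    using arg_cong[OF choose_pred_absorb[of k t], of real] assms(1,2) by (simp add: of_nat_diff)
  have "real t - real k \<le> 2 * real k * m / (1 - m)"
    using assms(4) by linarith
  then have gap: "(1 - m) * (real t - real k) \<le> 2 * real k * m"
    using assms(3) by (simp add: pos_le_divide_eq mult.commute)
  have "real k * ((1 - m) * ?b) = (1 - m) * (real k * ?b)"
    by (rule mult.left_commute)
  also have "\<dots> = (1 - m) * (real t - real k) * ?a"
    by (simp only: ratio mult.assoc)
  also have "\<dots> \<le> 2 * real k * m * ?a"
    using gap by (rule mult_right_mono) simp
  also have "\<dots> = real k * (2 * m * ?a)"
    by simp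
  finally show ?thesis
    by (rule mult_left_le_imp_le) (use assms(1) in simp)
qed

lemma inner_sum_ksubsets_ge:
  fixes U :: "nat set \<Rightarrow> 'a::real_inner" and m :: real
  assumes T: "finite T" "i \<in> T" "k \<le> card T"
    and m: "m < 1" "real (card T) \<le> real k + 2 * real k * m / (1 - m)"
    and unit: "norm v = 1" "\<And>S. S \<subseteq> T \<Longrightarrow> card S = k \<Longrightarrow> norm (U S) = 1"
    and margin: "\<And>S. S \<subseteq> T \<Longrightarrow> card S = k \<Longrightarrow> i \<in> S \<Longrightarrow> m \<le> inner (U S) v"
  shows "- m * real (card T choose k) \<le> inner (\<Sum>S | S \<subseteq> T \<and> card S = k. U S) v"
proof -
  let ?F = "{S. S \<subseteq> T \<and> card S = k}"
  let ?a = "real ((card T - 1) choose (k - 1))" and ?b = "real ((card T - 1) choose k)"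
  have "0 < card T" using T card_gt_0_iff by blast
  then have "0 < k" using m(2) by (cases k) auto
  have "{S\<in>?F. i \<in> S} = {S. S \<subseteq> T \<and> card S = k \<and> i \<in> S}"
    and "{S\<in>?F. i \<notin> S} = {S. S \<subseteq> T \<and> card S = k \<and> i \<notin> S}" by auto
  moreover have "m * card {S\<in>?F. i \<in> S} - card {S\<in>?F. i \<notin> S} \<le> inner (\<Sum>S\<in>?F. U S) v"
    using T(1) unit margin by (intro inner_sum_unit_ge) auto
  ultimately have "m * ?a - ?b \<le> inner (\<Sum>S\<in>?F. U S) v"
    by (simp only: card_ksubsets_containing[OF T(1,2) \<open>0 < k\<close>] card_ksubsets_avoiding[OF T(1,2)])
  moreover have "real (card T choose k) = ?a + ?b"
    using choose_reduce_nat[OF \<open>0 < card T\<close> \<open>0 < k\<close>] by simp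
  moreover have "(1 - m) * ?b \<le> 2 * m * ?a"
    using margin_choose_ineq[OF \<open>0 < k\<close> T(3) m] .
  ultimately show ?thesis by (simp add: algebra_simps)
qed

lemma inner_sum_ksubsets_le:
  fixes U :: "nat set \<Rightarrow> 'a::real_inner" and m :: real
  assumes "finite T" "\<And>S. S \<subseteq> T \<Longrightarrow> card S = k \<Longrightarrow> inner (U S) v \<le> - m"
  shows "inner (\<Sum>S | S \<subseteq> T \<and> card S = k. U S) v \<le> - m * real (card T choose k)"
proof -
  have "inner (\<Sum>S | S \<subseteq> T \<and> card S = k. U S) v = (\<Sum>S | S \<subseteq> T \<and> card S = k. inner (U S) v)"
    by (simp add: inner_sum_left)
  also have "\<dots> \<le> (\<Sum>S | S \<subseteq> T \<and> card S = k. - m)"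
    using assms(2) by (intro sum_mono) blast
  also have "\<dots> = - m * real (card T choose k)"
    using n_subsets[OF assms(1)] by simp
  finally show ?thesis .
qed

lemma unit_separator_of_nonzero:
  fixes h :: "'a::real_inner"
  assumes "h \<noteq> 0" "\<forall>i\<in>I. c \<le> inner h (x i)" "\<forall>j\<in>J. inner h (x j) \<le> c"
  shows "\<exists>h c. norm h = 1 \<and> (\<forall>i\<in>I. c \<le> inner h (x i)) \<and> (\<forall>j\<in>J. inner h (x j) \<le> c)"
proof (intro exI conjI)
  show "norm (h /\<^sub>R norm h) = 1" using assms(1) by simp
  show "\<forall>i\<in>I. c / norm h \<le> inner (h /\<^sub>R norm h) (x i)"
    using assms(1,2) by (simp add: divide_right_mono divide_inverse_commute)
  show "\<forall>j\<in>J. inner (h /\<^sub>R norm h) (x j) \<le> c / norm h"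
    using assms(1,3) by (simp add: divide_right_mono divide_inverse_commute)
qed

theorem propositionG1:
  fixes n k :: nat and m :: real
    and U :: "nat set \<Rightarrow> 'a::euclidean_space" and V :: "nat \<Rightarrow> 'a"
  assumes emb: "margin_embedding (ksubsets n k) n S_matrix m U V"
    and m_pos: "0 < m" and m_lt1: "m < 1"
    and T_sub: "T \<subseteq> {..<n}"
    and T_lo: "k \<le> card T"
    and T_hi1: "real (card T) \<le> real k + 2 * real k * m / (1 - m)"
    and T_hi2: "real (card T) \<le> real n - 1"
  shows "\<exists>h c. norm h = 1 \<and> (\<forall>i\<in>T. inner h (V i) \<ge> c) \<and>
                (\<forall>j\<in>{..<n} - T. inner h (V j) \<le> c)"
proof -
  let ?F = "{S. S \<subseteq> T \<and> card S = k}"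
  define h where "h = (\<Sum>S\<in>?F. U S)"
  define c where "c = - m * real (card T choose k)"
  have "finite T" using T_sub finite_subset by blast
  have U_unit: "\<And>S. S \<in> ksubsets n k \<Longrightarrow> norm (U S) = 1"
    and V_unit: "\<And>i. i < n \<Longrightarrow> norm (V i) = 1"
    and member: "\<And>S i. S \<in> ksubsets n k \<Longrightarrow> i < n \<Longrightarrow> i \<in> S \<Longrightarrow> m \<le> inner (U S) (V i)"
    and nonmember: "\<And>S i. S \<in> ksubsets n k \<Longrightarrow> i < n \<Longrightarrow> i \<notin> S \<Longrightarrow> inner (U S) (V i) \<le> - m"
    using emb unfolding margin_embedding_def S_matrix_def by auto
  have row: "S \<in> ksubsets n k" if "S \<subseteq> T" "card S = k" for S
    using that T_sub unfolding ksubsets_def by auto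
  have inside: "\<forall>i\<in>T. c \<le> inner h (V i)"
  proof
    fix i assume "i \<in> T"
    with T_sub V_unit U_unit member row show "c \<le> inner h (V i)"
      unfolding c_def h_def
      by (intro inner_sum_ksubsets_ge[OF \<open>finite T\<close> \<open>i \<in> T\<close> T_lo m_lt1 T_hi1]) auto
  qed
  have outside: "\<forall>j\<in>{..<n} - T. inner h (V j) \<le> c"
  proof
    fix j assume "j \<in> {..<n} - T"
    with nonmember row show "inner h (V j) \<le> c"
      unfolding c_def h_def by (intro inner_sum_ksubsets_le[OF \<open>finite T\<close>]) auto
  qed
  have "card T < card {..<n}" using T_hi2 by simp
  then have "T \<noteq> {..<n}" by auto
  then obtain j where "j \<in> {..<n} - T" using T_sub by blast
  moreover have "c < 0" unfolding c_def using m_pos T_lo by simp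
  ultimately have "h \<noteq> 0" using outside by auto
  then show ?thesis using unit_separator_of_nonzero[OF _ inside outside] by blast
qed

end
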